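(* Let $G$ be a finite weakly minmax group and let $N$ be a normal subgroup of $G$ which is an intersection of maximal subgroups of $G$. Then $G/N$ is weakly minmax.
   Context: A subgroup of $G$ is a maximal intersection if it is an intersection of finitely many (at least one) maximal subgroups of $G$; $\mathcal M(G)$ is the poset under inclusion consisting of $G$ and all maximal intersections in $G$. An unrefinable chain in $\mathcal M(G)$ is a chain $K_t<\dots<K_0$ of elements of $\mathcal M(G)$ to which no further element of $\mathcal M(G)$ can be added; its length is $t$. $\mathrm{MinInt}(G)$ and $\mathrm{MaxInt}(G)$ are the minimal and maximal lengths of unrefinable chains in $\mathcal M(G)$. $\alpha(G)$ is the smallest cardinality of a family of maximal subgroups of $G$ whose intersection equals the Frattini subgroup $\Phi(G)$. $G$ is weakly minmax if $\mathrm{MinInt}(G)=\mathrm{MaxInt}(G)=\alpha(G)$. *)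

theory Defs
  imports "HOL-Algebra.Algebra"
begin

definition maximal_subgroup :: "('a, 'b) monoid_scheme \<Rightarrow> 'a set \<Rightarrow> bool" where
  "maximal_subgroup G H \<longleftrightarrow> subgroup H G \<and> H \<noteq> carrier G \<and>
     (\<forall>K. subgroup K G \<and> H \<subseteq> K \<longrightarrow> K = H \<or> K = carrier G)"

definition max_intersection :: "('a, 'b) monoid_scheme \<Rightarrow> 'a set \<Rightarrow> bool" where
  "max_intersection G H \<longleftrightarrow> (\<exists>F. finite F \<and> F \<noteq> {} \<and>
     (\<forall>M\<in>F. maximal_subgroup G M) \<and> H = \<Inter>F)"

definition MIposet :: "('a, 'b) monoid_scheme \<Rightarrow> 'a set set" where
  "MIposet G = insert (carrier G) {H. max_intersection G H}"

definition frattini :: "('a, 'b) monoid_scheme \<Rightarrow> 'a set" where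
  "frattini G = carrier G \<inter> \<Inter>{H. maximal_subgroup G H}"

definition unrefinable_chain :: "('a, 'b) monoid_scheme \<Rightarrow> (nat \<Rightarrow> 'a set) \<Rightarrow> nat \<Rightarrow> bool" where
  "unrefinable_chain G K t \<longleftrightarrow>
     (\<forall>i\<le>t. K i \<in> MIposet G) \<and> (\<forall>i<t. K (Suc i) \<subset> K i) \<and>
     \<not> (\<exists>Y\<in>MIposet G. Y \<notin> K ` {0..t} \<and> (\<forall>i\<le>t. Y \<subseteq> K i \<or> K i \<subseteq> Y))"

definition MinInt :: "('a, 'b) monoid_scheme \<Rightarrow> nat" where
  "MinInt G = (LEAST t. \<exists>K. unrefinable_chain G K t)"

definition MaxInt :: "('a, 'b) monoid_scheme \<Rightarrow> nat" where
  "MaxInt G = Max {t. \<exists>K. unrefinable_chain G K t}"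

definition alpha :: "('a, 'b) monoid_scheme \<Rightarrow> nat" where
  "alpha G = (LEAST n. \<exists>F. finite F \<and> card F = n \<and> (\<forall>M\<in>F. maximal_subgroup G M) \<and>
                          carrier G \<inter> \<Inter>F = frattini G)"

definition weakly_minmax :: "('a, 'b) monoid_scheme \<Rightarrow> bool" where
  "weakly_minmax G \<longleftrightarrow> MinInt G = MaxInt G \<and> MaxInt G = alpha G"

end

theory Submission
  imports Defs
begin

(* Add G to the maximal subgroups and close under finite intersections: this is M(G).  In such a
   closure, if V covers U then U is the intersection of V with a single generator, so a maximal
   chain of the interval [B, T] with k members yields fewer than k generators cutting B out
   of T.
   Fix a maximal chain D of M(G) below N.  Any maximal chain C of the part of M(G) above N,
   glued to D, is a maximal chain of M(G), so |C| + |D| = alpha(G) + 2.  Generators read off C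
   cut N out of G; together with those read off D they cut Phi(G) out of G, so
   alpha(G) <= |F| + |D| - 1 for every family F of maximal subgroups with intersection N.  Hence
   |C| - 1 is the least size of such a family, whatever C is.  Finally the projection onto G/N
   identifies the part of M(G) above N with M(G/N), preserving order, intersections and
   maximal subgroups. *)

section \<open>Maximal chains of families of sets\<close>

lemma subset_maxchain_iff:
  "subset.maxchain P C \<longleftrightarrow>
     subset.chain P C \<and> (\<forall>Y\<in>P. (\<forall>U\<in>C. Y \<subseteq> U \<or> U \<subseteq> Y) \<longrightarrow> Y \<in> C)"
proof
  assume C: "subset.maxchain P C"
  then have chain: "subset.chain P C"
    by (rule subset.maxchain_imp_chain)
  moreover have "Y \<in> C" if "Y \<in> P" "\<forall>U\<in>C. Y \<subseteq> U \<or> U \<subseteq> Y" for Y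
  proof (rule ccontr)
    assume "Y \<notin> C"
    then have "C \<subset> insert Y C"
      by blast
    moreover have "subset.chain P (insert Y C)"
      using chain that unfolding subset_chain_insert by blast
    ultimately show False
      using C unfolding subset.maxchain_def by simp
  qed
  ultimately show "subset.chain P C \<and> (\<forall>Y\<in>P. (\<forall>U\<in>C. Y \<subseteq> U \<or> U \<subseteq> Y) \<longrightarrow> Y \<in> C)"
    by blast
next
  assume C: "subset.chain P C \<and> (\<forall>Y\<in>P. (\<forall>U\<in>C. Y \<subseteq> U \<or> U \<subseteq> Y) \<longrightarrow> Y \<in> C)"
  have "\<not> C \<subset> S" if S: "subset.chain P S" for S
  proof
    assume "C \<subset> S"
    then obtain Y where "Y \<in> S" "Y \<notin> C"
      by blast
    moreover have "Y \<in> P" "\<forall>U\<in>C. Y \<subseteq> U \<or> U \<subseteq> Y"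
      using S \<open>C \<subset> S\<close> \<open>Y \<in> S\<close> unfolding subset_chain_def by blast+
    ultimately show False
      using C by blast
  qed
  then show "subset.maxchain P C"
    using C unfolding subset.maxchain_def by simp
qed

lemma subset_maxchainD:
  assumes "subset.maxchain P C"
  shows "C \<subseteq> P" "U \<in> C \<Longrightarrow> V \<in> C \<Longrightarrow> U \<subseteq> V \<or> V \<subseteq> U"
    "Y \<in> P \<Longrightarrow> (\<And>U. U \<in> C \<Longrightarrow> Y \<subseteq> U \<or> U \<subseteq> Y) \<Longrightarrow> Y \<in> C"
proof -
  have "subset.chain P C" "\<forall>Y\<in>P. (\<forall>U\<in>C. Y \<subseteq> U \<or> U \<subseteq> Y) \<longrightarrow> Y \<in> C"
    using assms unfolding subset_maxchain_iff by simp_all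
  then show "C \<subseteq> P" "U \<in> C \<Longrightarrow> V \<in> C \<Longrightarrow> U \<subseteq> V \<or> V \<subseteq> U"
    "Y \<in> P \<Longrightarrow> (\<And>U. U \<in> C \<Longrightarrow> Y \<subseteq> U \<or> U \<subseteq> Y) \<Longrightarrow> Y \<in> C"
    unfolding subset_chain_def by auto
qed

lemma strict_antimono_chain:
  assumes "\<forall>i<t. K (Suc i) \<subset> K i" "i < j" "j \<le> t"
  shows "K j \<subset> K i"
  using assms(2,3)
proof (induction j)
  case (Suc j)
  have "K (Suc j) \<subset> K j"
    using assms(1) Suc.prems(2) by simp
  moreover have "i = j \<or> K j \<subset> K i"
    using Suc by linarith
  ultimately show ?case
    by auto
qed simp

lemma finite_chain_enumeration:
  assumes "finite C" "card C = Suc t" "subset.chain P C"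
  shows "\<exists>K. K ` {0..t} = C \<and> (\<forall>i<t. K (Suc i) \<subset> K i)"
  using assms
proof (induction t arbitrary: C)
  case 0
  then obtain U where "C = {U}"
    by (auto simp: card_Suc_eq)
  then show ?case
    by (intro exI[of _ "\<lambda>_. U"]) simp
next
  case (Suc t)
  define T where "T = \<Union>C"
  have T: "T \<in> C"
    unfolding T_def using Suc.prems by (intro Union_in_chain) auto
  have "subset.chain P (C - {T})"
    using Suc.prems(3) unfolding subset_chain_def by blast
  moreover have "card (C - {T}) = Suc t"
    using Suc.prems T by simp
  ultimately obtain K where K: "K ` {0..t} = C - {T}" "\<forall>i<t. K (Suc i) \<subset> K i"
    using Suc.IH[of "C - {T}"] Suc.prems(1) by auto
  define K' where "K' = case_nat T K"
  have "K' ` {0..Suc t} = insert T (K ` {0..t})"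
    unfolding atLeast0_atMost_Suc_eq_insert_0 image_insert image_image by (simp add: K'_def)
  then have "K' ` {0..Suc t} = C"
    using K(1) T by auto
  moreover have "K 0 \<in> C - {T}"
    using K(1) by auto
  then have "K 0 \<subset> T"
    unfolding T_def by blast
  then have "K' (Suc i) \<subset> K' i" if "i < Suc t" for i
    using K(2) that by (cases i) (simp_all add: K'_def)
  ultimately show ?case
    by blast
qed

lemma maxchain_interval_Diff_bottom:
  assumes C: "subset.maxchain {Y\<in>P. B \<subseteq> Y \<and> Y \<subseteq> T} C"
    and B': "B' \<in> C - {B}" "\<forall>U\<in>C - {B}. B' \<subseteq> U"
  shows "subset.maxchain {Y\<in>P. B' \<subseteq> Y \<and> Y \<subseteq> T} (C - {B})"
    and "\<And>Y. Y \<in> P \<Longrightarrow> B \<subseteq> Y \<Longrightarrow> Y \<subseteq> B' \<Longrightarrow> Y = B \<or> Y = B'"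
proof -
  have in_C: "Y \<in> C" if "Y \<in> P" "B \<subseteq> Y" "Y \<subseteq> T" "\<forall>U\<in>C - {B}. Y \<subseteq> U \<or> U \<subseteq> Y" for Y
    using subset_maxchainD(3)[OF C] that by blast
  have "B \<subseteq> B'"
    using B' subset_maxchainD(1)[OF C] by blast
  show "Y = B \<or> Y = B'" if "Y \<in> P" "B \<subseteq> Y" "Y \<subseteq> B'" for Y
  proof -
    have "Y \<subseteq> T"
      using B' subset_maxchainD(1)[OF C] that(3) by blast
    then have "Y \<in> C"
      using in_C that B'(2) by blast
    then show ?thesis
      using B'(2) that(3) by blast
  qed
  show "subset.maxchain {Y\<in>P. B' \<subseteq> Y \<and> Y \<subseteq> T} (C - {B})"
    unfolding subset_maxchain_iff subset_chain_def
  proof (intro conjI ballI impI)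
    show "C - {B} \<subseteq> {Y\<in>P. B' \<subseteq> Y \<and> Y \<subseteq> T}"
      using B'(2) subset_maxchainD(1)[OF C] by blast
    show "U \<subseteq> V \<or> V \<subseteq> U" if "U \<in> C - {B}" "V \<in> C - {B}" for U V
      using subset_maxchainD(2)[OF C] that by blast
    show "Y \<in> C - {B}"
      if "Y \<in> {Y\<in>P. B' \<subseteq> Y \<and> Y \<subseteq> T}" "\<forall>U\<in>C - {B}. Y \<subseteq> U \<or> U \<subseteq> Y" for Y
    proof
      have "B \<subseteq> Y"
        using that(1) \<open>B \<subseteq> B'\<close> by blast
      then show "Y \<in> C"
        using in_C that by blast
      show "Y \<notin> {B}"
        using that(1) \<open>B \<subseteq> B'\<close> B'(1) by blast
    qed
  qed
qed

section \<open>Closures under finite intersections\<close>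

definition meet_closure :: "'a set \<Rightarrow> 'a set set \<Rightarrow> 'a set set" where
  "meet_closure A Ms = insert A {\<Inter>F | F. finite F \<and> F \<noteq> {} \<and> F \<subseteq> Ms}"

definition min_Inter_card :: "'a set \<Rightarrow> 'a set set \<Rightarrow> nat" where
  "min_Inter_card A Ms = (LEAST n. \<exists>F. finite F \<and> card F = n \<and> F \<subseteq> Ms \<and> A \<inter> \<Inter>F = A \<inter> \<Inter>Ms)"

lemma meet_closureI: "finite F \<Longrightarrow> F \<noteq> {} \<Longrightarrow> F \<subseteq> Ms \<Longrightarrow> \<Inter>F \<in> meet_closure A Ms"
  unfolding meet_closure_def by blast

lemma meet_closure_top: "A \<in> meet_closure A Ms"
  unfolding meet_closure_def by simp

lemma meet_closureE:
  assumes "U \<in> meet_closure A Ms"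
  obtains "U = A" | F where "finite F" "F \<noteq> {}" "F \<subseteq> Ms" "U = \<Inter>F"
  using assms unfolding meet_closure_def by blast

lemma meet_closure_subset_Pow: "Ms \<subseteq> Pow A \<Longrightarrow> meet_closure A Ms \<subseteq> Pow A"
  unfolding meet_closure_def by auto

lemma finite_meet_closure: "finite A \<Longrightarrow> Ms \<subseteq> Pow A \<Longrightarrow> finite (meet_closure A Ms)"
  by (meson finite_Pow_iff finite_subset meet_closure_subset_Pow)

lemma meet_closure_Int:
  assumes "Ms \<subseteq> Pow A" "U \<in> meet_closure A Ms" "M \<in> Ms"
  shows "U \<inter> M \<in> meet_closure A Ms"
  using assms(2)
proof (cases rule: meet_closureE)
  case 1
  then have "U \<inter> M = \<Inter>{M}"
    using assms(1,3) by auto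
  then show ?thesis
    using assms(3) meet_closureI[of "{M}"] by simp
next
  case (2 F)
  then have "U \<inter> M = \<Inter>(insert M F)"
    by blast
  then show ?thesis
    using 2 assms(3) meet_closureI[of "insert M F"] by simp
qed

lemma Inter_in_meet_closure:
  assumes "finite A" "Ms \<subseteq> Pow A"
  shows "A \<inter> \<Inter>Ms \<in> meet_closure A Ms"
proof (cases "Ms = {}")
  case False
  have "finite Ms"
    using assms by (meson finite_Pow_iff finite_subset)
  moreover have "A \<inter> \<Inter>Ms = \<Inter>Ms"
    using False assms(2) by blast
  ultimately show ?thesis
    using False meet_closureI[of Ms] by simp
qed (simp add: meet_closure_top)

lemma meet_closure_cover:
  assumes Ms: "Ms \<subseteq> Pow A" and UV: "U \<in> meet_closure A Ms" "V \<in> meet_closure A Ms" "U \<subset> V"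
    and cover: "\<And>Y. Y \<in> meet_closure A Ms \<Longrightarrow> U \<subseteq> Y \<Longrightarrow> Y \<subseteq> V \<Longrightarrow> Y = U \<or> Y = V"
  obtains M where "M \<in> Ms" "U = V \<inter> M"
proof -
  have "U \<noteq> A"
    using UV meet_closure_subset_Pow[OF Ms] by blast
  then obtain F where F: "F \<subseteq> Ms" "U = \<Inter>F"
    using UV(1) by (auto elim: meet_closureE)
  then obtain M where M: "M \<in> F" "\<not> V \<subseteq> M"
    using UV(3) by blast
  have "M \<in> Ms" "U \<subseteq> V \<inter> M"
    using F M(1) UV(3) by auto
  then have "V \<inter> M = U \<or> V \<inter> M = V"
    using cover[OF meet_closure_Int[OF Ms UV(2)]] by blast
  then show ?thesis
    using that \<open>M \<in> Ms\<close> M(2) by blast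
qed

lemma maxchain_interval_generators:
  assumes Ms: "Ms \<subseteq> Pow A" and "finite C"
    and "subset.maxchain {Y\<in>meet_closure A Ms. B \<subseteq> Y \<and> Y \<subseteq> T} C" "B \<in> C" "T \<in> C"
  shows "\<exists>F\<subseteq>Ms. finite F \<and> card F < card C \<and> T \<inter> \<Inter>F = B"
  using assms(2-)
proof (induction "card C" arbitrary: C B rule: less_induct)
  case less
  note C = less.prems(2)
  show ?case
  proof (cases "B = T")
    case True
    then have "card C > 0"
      using less.prems(1,3) card_gt_0_iff by blast
    with True show ?thesis
      by (intro exI[of _ "{}"]) simp
  next
    case False
    \<comment> \<open>\<open>B'\<close> covers \<open>B\<close>, so a single generator cuts \<open>B\<close> out of \<open>B'\<close>.\<close>
    define B' where "B' = \<Inter>(C - {B})"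
    have "subset.chain UNIV (C - {B})"
      unfolding subset_chain_def using subset_maxchainD(2)[OF C] by blast
    then have B': "B' \<in> C - {B}"
      unfolding B'_def using less.prems(1,4) False by (intro Inter_in_chain) auto
    have "\<forall>U\<in>C - {B}. B' \<subseteq> U"
      unfolding B'_def by blast
    note step = maxchain_interval_Diff_bottom[OF C B' this]
    have "B \<in> meet_closure A Ms" "B' \<in> meet_closure A Ms" "B \<subset> B'"
      using subset_maxchainD(1)[OF C] less.prems(3) B' by blast+
    then obtain M where M: "M \<in> Ms" "B = B' \<inter> M"
      using meet_closure_cover[OF Ms _ _ _ step(2)] by blast
    have "card (C - {B}) < card C"
      using less.prems(1,3) by (rule card_Diff1_less)
    then obtain F where F: "F \<subseteq> Ms" "finite F" "card F < card (C - {B})" "T \<inter> \<Inter>F = B'"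
      using less.hyps[OF _ _ step(1) B'] less.prems(1,4) False by blast
    have "card (insert M F) < card C"
      using F(2,3) \<open>card (C - {B}) < card C\<close> card_insert_le[of F M]
      by (simp add: card_insert_if)
    moreover have "T \<inter> \<Inter>(insert M F) = B"
      using F(4) M(2) by blast
    ultimately show ?thesis
      using F(1,2) M(1) by (intro exI[of _ "insert M F"]) simp
  qed
qed

lemma maxchain_Un_above_below:
  assumes C: "subset.maxchain {U\<in>P. N \<subseteq> U} C" and D: "subset.maxchain {U\<in>P. U \<subseteq> N} D"
    and "N \<in> P"
  shows "subset.maxchain P (C \<union> D)" "C \<inter> D = {N}"
proof -
  have CP: "C \<subseteq> P" "\<And>U. U \<in> C \<Longrightarrow> N \<subseteq> U"
    using subset_maxchainD(1)[OF C] by auto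
  have DP: "D \<subseteq> P" "\<And>U. U \<in> D \<Longrightarrow> U \<subseteq> N"
    using subset_maxchainD(1)[OF D] by auto
  have "N \<in> C"
    using subset_maxchainD(3)[OF C] \<open>N \<in> P\<close> CP(2) by simp
  have "N \<in> D"
    using subset_maxchainD(3)[OF D] \<open>N \<in> P\<close> DP(2) by simp
  show "C \<inter> D = {N}"
    using \<open>N \<in> C\<close> \<open>N \<in> D\<close> CP(2) DP(2) by auto
  show "subset.maxchain P (C \<union> D)"
    unfolding subset_maxchain_iff subset_chain_def
  proof (intro conjI ballI impI)
    show "C \<union> D \<subseteq> P"
      using CP(1) DP(1) by blast
    show "U \<subseteq> V \<or> V \<subseteq> U" if "U \<in> C \<union> D" "V \<in> C \<union> D" for U V
    proof (cases "U \<in> C \<longleftrightarrow> V \<in> C")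
      case True
      then show ?thesis
        using that subset_maxchainD(2)[OF C, of U V] subset_maxchainD(2)[OF D, of U V] by blast
    next
      case False
      then show ?thesis
        using that CP(2) DP(2) by (meson Un_iff subset_trans)
    qed
    show "Y \<in> C \<union> D" if "Y \<in> P" "\<forall>U\<in>C \<union> D. Y \<subseteq> U \<or> U \<subseteq> Y" for Y
    proof -
      have "Y \<subseteq> N \<or> N \<subseteq> Y"
        using that(2) \<open>N \<in> C\<close> by blast
      then show ?thesis
        using that subset_maxchainD(3)[OF C, of Y] subset_maxchainD(3)[OF D, of Y] by auto
    qed
  qed
qed

lemma card_maxchain_above_below:
  assumes "finite P" "N \<in> P" and graded: "\<And>E. subset.maxchain P E \<Longrightarrow> card E = k"
    and C: "subset.maxchain {U\<in>P. N \<subseteq> U} C" and D: "subset.maxchain {U\<in>P. U \<subseteq> N} D"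
  shows "card C + card D = Suc k"
proof -
  have "finite C" "finite D"
    using finite_subset[OF subset_maxchainD(1)[OF C]] finite_subset[OF subset_maxchainD(1)[OF D]]
      \<open>finite P\<close> by simp_all
  then have "card C + card D = card (C \<union> D) + card (C \<inter> D)"
    by (rule card_Un_Int)
  moreover have "card (C \<union> D) = k" "C \<inter> D = {N}"
    using maxchain_Un_above_below[OF C D \<open>N \<in> P\<close>] graded by blast+
  ultimately show ?thesis
    by simp
qed

lemma meet_closure_above:
  assumes "N \<subseteq> A"
  shows "meet_closure A {M\<in>Ms. N \<subseteq> M} = {U\<in>meet_closure A Ms. N \<subseteq> U}"
proof (intro equalityI subsetI)
  fix U
  assume "U \<in> meet_closure A {M\<in>Ms. N \<subseteq> M}"
  then show "U \<in> {U\<in>meet_closure A Ms. N \<subseteq> U}"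
    using assms by (cases rule: meet_closureE) (auto simp: meet_closure_top intro!: meet_closureI)
next
  fix U
  assume "U \<in> {U\<in>meet_closure A Ms. N \<subseteq> U}"
  then have "U \<in> meet_closure A Ms" "N \<subseteq> U"
    by simp_all
  then show "U \<in> meet_closure A {M\<in>Ms. N \<subseteq> M}"
    by (cases rule: meet_closureE) (auto simp: meet_closure_top intro!: meet_closureI)
qed

lemma Inter_above:
  assumes "Ms \<subseteq> Pow A" "N \<in> meet_closure A Ms"
  shows "A \<inter> \<Inter>{M\<in>Ms. N \<subseteq> M} = N"
  using assms(2)
proof (cases rule: meet_closureE)
  case (2 F)
  then have "\<Inter>{M\<in>Ms. N \<subseteq> M} \<subseteq> N"
    by blast
  moreover have "N \<subseteq> A"
    using 2 assms(1) by blast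
  ultimately show ?thesis
    by blast
qed blast

lemma min_Inter_card_le:
  "finite F \<Longrightarrow> F \<subseteq> Ms \<Longrightarrow> A \<inter> \<Inter>F = A \<inter> \<Inter>Ms \<Longrightarrow> min_Inter_card A Ms \<le> card F"
  unfolding min_Inter_card_def by (rule Least_le) blast

lemma min_Inter_card_eqI:
  assumes "finite F" "F \<subseteq> Ms" "A \<inter> \<Inter>F = A \<inter> \<Inter>Ms" "card F \<le> m"
    and "\<And>F. finite F \<Longrightarrow> F \<subseteq> Ms \<Longrightarrow> A \<inter> \<Inter>F = A \<inter> \<Inter>Ms \<Longrightarrow> m \<le> card F"
  shows "min_Inter_card A Ms = m"
proof -
  have "card F = m"
    using assms by (simp add: le_antisym)
  then show ?thesis
    unfolding min_Inter_card_def using assms by (intro Least_equality) auto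
qed

lemma min_Inter_card_le_add:
  assumes "finite F" "F \<subseteq> Ms" "A \<inter> \<Inter>F = N" "finite F'" "F' \<subseteq> Ms" "N \<inter> \<Inter>F' = A \<inter> \<Inter>Ms"
  shows "min_Inter_card A Ms \<le> card F + card F'"
proof -
  have "min_Inter_card A Ms \<le> card (F \<union> F')"
    using assms by (intro min_Inter_card_le) auto
  also have "\<dots> \<le> card F + card F'"
    by (rule card_Un_le)
  finally show ?thesis .
qed

lemma maxchain_interval_ends:
  assumes "subset.maxchain {Y\<in>P. B \<subseteq> Y \<and> Y \<subseteq> T} C" "B \<in> P" "T \<in> P" "B \<subseteq> T"
  shows "B \<in> C" "T \<in> C"
proof -
  have "B \<subseteq> U" "U \<subseteq> T" if "U \<in> C" for U
    using subset_maxchainD(1)[OF assms(1)] that by auto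
  then show "B \<in> C" "T \<in> C"
    using assms(2-) by (auto intro!: subset_maxchainD(3)[OF assms(1)])
qed

lemma maxchain_below_generators:
  assumes A: "finite A" and Ms: "Ms \<subseteq> Pow A" and N: "N \<in> meet_closure A Ms"
    and D: "subset.maxchain {U\<in>meet_closure A Ms. U \<subseteq> N} D"
  shows "\<exists>F\<subseteq>Ms. finite F \<and> card F < card D \<and> N \<inter> \<Inter>F = A \<inter> \<Inter>Ms"
proof -
  have bottom: "A \<inter> \<Inter>Ms \<subseteq> U" if "U \<in> meet_closure A Ms" for U
    using that by (cases rule: meet_closureE) auto
  then have "{U\<in>meet_closure A Ms. U \<subseteq> N} = {U\<in>meet_closure A Ms. A \<inter> \<Inter>Ms \<subseteq> U \<and> U \<subseteq> N}"
    by blast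
  then have D': "subset.maxchain {U\<in>meet_closure A Ms. A \<inter> \<Inter>Ms \<subseteq> U \<and> U \<subseteq> N} D"
    using D by simp
  have "finite D"
    using finite_subset[OF subset_maxchainD(1)[OF D]] finite_meet_closure[OF A Ms] by simp
  moreover have "A \<inter> \<Inter>Ms \<in> D" "N \<in> D"
    using maxchain_interval_ends[OF D' Inter_in_meet_closure[OF A Ms] N bottom[OF N]] by simp_all
  ultimately show ?thesis
    using maxchain_interval_generators[OF Ms _ D'] by blast
qed

lemma maxchain_above_generators:
  assumes A: "finite A" and Ms: "Ms \<subseteq> Pow A" and N: "N \<in> meet_closure A Ms"
    and C: "subset.maxchain (meet_closure A {M\<in>Ms. N \<subseteq> M}) C"
  shows "\<exists>F\<subseteq>{M\<in>Ms. N \<subseteq> M}. finite F \<and> card F < card C \<and> A \<inter> \<Inter>F = N"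
proof -
  have "N \<subseteq> A"
    using N meet_closure_subset_Pow[OF Ms] by blast
  have "meet_closure A {M\<in>Ms. N \<subseteq> M} = {U\<in>meet_closure A Ms. N \<subseteq> U \<and> U \<subseteq> A}"
    unfolding meet_closure_above[OF \<open>N \<subseteq> A\<close>] using meet_closure_subset_Pow[OF Ms] by blast
  then have C': "subset.maxchain {U\<in>meet_closure A Ms. N \<subseteq> U \<and> U \<subseteq> A} C"
    using C by simp
  have "finite C"
    using finite_subset[OF subset_maxchainD(1)[OF C']] finite_meet_closure[OF A Ms] by simp
  moreover have "N \<in> C" "A \<in> C"
    using maxchain_interval_ends[OF C' N meet_closure_top \<open>N \<subseteq> A\<close>] by simp_all
  ultimately obtain F where F: "F \<subseteq> Ms" "finite F" "card F < card C" "A \<inter> \<Inter>F = N"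
    using maxchain_interval_generators[OF Ms _ C'] by blast
  moreover have "F \<subseteq> {M\<in>Ms. N \<subseteq> M}"
    using F(1,4) by blast
  ultimately show ?thesis
    by blast
qed

theorem card_maxchain_meet_closure_above:
  assumes A: "finite A" and Ms: "Ms \<subseteq> Pow A" and N: "N \<in> meet_closure A Ms"
    and graded: "\<And>E. subset.maxchain (meet_closure A Ms) E \<Longrightarrow> card E = Suc (min_Inter_card A Ms)"
    and C: "subset.maxchain (meet_closure A {M\<in>Ms. N \<subseteq> M}) C"
  shows "card C = Suc (min_Inter_card A {M\<in>Ms. N \<subseteq> M})"
proof -
  define MsN where "MsN = {M\<in>Ms. N \<subseteq> M}"
  obtain D where D: "subset.maxchain {U\<in>meet_closure A Ms. U \<subseteq> N} D"
    using subset.Hausdorff by blast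
  obtain FD where FD: "FD \<subseteq> Ms" "finite FD" "card FD < card D" "N \<inter> \<Inter>FD = A \<inter> \<Inter>Ms"
    using maxchain_below_generators[OF A Ms N D] by blast
  obtain F where F: "F \<subseteq> MsN" "finite F" "card F < card C" "A \<inter> \<Inter>F = N"
    using maxchain_above_generators[OF A Ms N C] unfolding MsN_def by blast
  have "N \<subseteq> A"
    using N meet_closure_subset_Pow[OF Ms] by blast
  have sum: "card C + card D = Suc (Suc (min_Inter_card A Ms))"
    using card_maxchain_above_below[OF finite_meet_closure[OF A Ms] N graded _ D] C
    unfolding meet_closure_above[OF \<open>N \<subseteq> A\<close>] by simp
  have InterN: "A \<inter> \<Inter>MsN = N"
    unfolding MsN_def using Ms N by (rule Inter_above)
  have "card C - 1 \<le> card F'"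
    if "finite F'" "F' \<subseteq> MsN" "A \<inter> \<Inter>F' = A \<inter> \<Inter>MsN" for F'
  proof -
    have "F' \<subseteq> Ms"
      using that(2) unfolding MsN_def by blast
    then have "min_Inter_card A Ms \<le> card F' + card FD"
      using min_Inter_card_le_add[OF that(1) _ _ FD(2,1,4)] that(3) InterN by simp
    then show ?thesis
      using sum FD(3) by linarith
  qed
  moreover have "A \<inter> \<Inter>F = A \<inter> \<Inter>MsN" "card F \<le> card C - 1"
    using F(3,4) InterN by simp_all
  ultimately have "min_Inter_card A MsN = card C - 1"
    using F(1,2) by (intro min_Inter_card_eqI[of F])
  then show ?thesis
    unfolding MsN_def using F(3) by simp
qed

section \<open>Images of saturated sets\<close>

definition saturated :: "('a \<Rightarrow> 'b) \<Rightarrow> 'a set \<Rightarrow> 'a set \<Rightarrow> bool" where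
  "saturated f A U \<longleftrightarrow> U \<subseteq> A \<and> A \<inter> f -` f ` U \<subseteq> U"

lemma saturated_subset: "saturated f A U \<Longrightarrow> U \<subseteq> A"
  unfolding saturated_def by blast

lemma saturated_image_subset_iff:
  "saturated f A U \<Longrightarrow> saturated f A V \<Longrightarrow> f ` U \<subseteq> f ` V \<longleftrightarrow> U \<subseteq> V"
  unfolding saturated_def by blast

lemma saturated_image_eq_iff:
  "saturated f A U \<Longrightarrow> saturated f A V \<Longrightarrow> f ` U = f ` V \<longleftrightarrow> U = V"
  using saturated_image_subset_iff by blast

lemma saturated_Inter:
  "\<forall>U\<in>F. saturated f A U \<Longrightarrow> saturated f A (A \<inter> \<Inter>F)"
  unfolding saturated_def by blast

lemma image_Inter_saturated:
  assumes "\<forall>U\<in>F. saturated f A U"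
  shows "f ` (A \<inter> \<Inter>F) = f ` A \<inter> \<Inter>((`) f ` F)"
proof
  show "f ` (A \<inter> \<Inter>F) \<subseteq> f ` A \<inter> \<Inter>((`) f ` F)"
    by blast
  show "f ` A \<inter> \<Inter>((`) f ` F) \<subseteq> f ` (A \<inter> \<Inter>F)"
  proof
    fix y
    assume y: "y \<in> f ` A \<inter> \<Inter>((`) f ` F)"
    then obtain x where x: "x \<in> A" "y = f x"
      by blast
    have "x \<in> U" if "U \<in> F" for U
    proof -
      have "x \<in> A \<inter> f -` f ` U"
        using y that x by auto
      moreover have "A \<inter> f -` f ` U \<subseteq> U"
        using that assms unfolding saturated_def by blast
      ultimately show ?thesis
        by blast
    qed
    with x show "y \<in> f ` (A \<inter> \<Inter>F)"
      by blast
  qed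
qed

lemma saturated_meet_closure:
  assumes "\<forall>M\<in>Ms. saturated f A M" "U \<in> meet_closure A Ms"
  shows "saturated f A U"
  using assms(2)
proof (cases rule: meet_closureE)
  case 1
  then show ?thesis
    using saturated_Inter[of "{}"] by simp
next
  case (2 F)
  then have "\<forall>M\<in>F. saturated f A M"
    using assms(1) by blast
  moreover from this have "U = A \<inter> \<Inter>F"
    using 2 saturated_subset by blast
  ultimately show ?thesis
    using saturated_Inter by blast
qed

lemma Inter_image_saturated:
  assumes "F \<noteq> {}" "\<forall>M\<in>F. saturated f A M"
  shows "\<Inter>((`) f ` F) = f ` \<Inter>F"
proof -
  obtain M where "M \<in> F"
    using assms(1) by blast
  then have "\<Inter>((`) f ` F) \<subseteq> f ` A"
    using saturated_subset[of f A M] assms(2) by blast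
  then have "\<Inter>((`) f ` F) = f ` A \<inter> \<Inter>((`) f ` F)"
    by (simp add: Int_absorb1)
  also have "\<dots> = f ` (A \<inter> \<Inter>F)"
    using image_Inter_saturated[OF assms(2)] by simp
  also have "A \<inter> \<Inter>F = \<Inter>F"
    using \<open>M \<in> F\<close> saturated_subset[of f A M] assms(2) by blast
  finally show ?thesis .
qed

lemma meet_closure_image:
  assumes Ms: "\<forall>M\<in>Ms. saturated f A M"
  shows "meet_closure (f ` A) ((`) f ` Ms) = (`) f ` meet_closure A Ms"
proof -
  have image_Inter: "\<Inter>((`) f ` F) = f ` \<Inter>F" if "F \<noteq> {}" "F \<subseteq> Ms" for F
    using that Ms by (intro Inter_image_saturated) blast+
  show ?thesis
  proof (intro equalityI subsetI)
    fix W
    assume "W \<in> meet_closure (f ` A) ((`) f ` Ms)"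
    then show "W \<in> (`) f ` meet_closure A Ms"
    proof (cases rule: meet_closureE)
      case 1
      then show ?thesis
        using meet_closure_top by blast
    next
      case (2 F')
      then obtain F where F: "F \<subseteq> Ms" "finite F" "F' = (`) f ` F"
        by (meson finite_subset_image)
      then have "F \<noteq> {}" "W = f ` \<Inter>F"
        using 2 image_Inter[of F] by auto
      then show ?thesis
        using F(1,2) meet_closureI[of F Ms A] by blast
    qed
  next
    fix W
    assume "W \<in> (`) f ` meet_closure A Ms"
    then obtain U where U: "U \<in> meet_closure A Ms" "W = f ` U"
      by blast
    from U(1) show "W \<in> meet_closure (f ` A) ((`) f ` Ms)"
    proof (cases rule: meet_closureE)
      case 1
      then show ?thesis
        using U(2) meet_closure_top by blast
    next
      case (2 F)
      then have "W = \<Inter>((`) f ` F)"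
        using U(2) image_Inter[of F] by simp
      then show ?thesis
        using 2 meet_closureI[of "(`) f ` F" "(`) f ` Ms" "f ` A"] by blast
    qed
  qed
qed

lemma maxchain_image_embedding:
  assumes emb: "\<And>U V. U \<in> P \<Longrightarrow> V \<in> P \<Longrightarrow> \<phi> U \<subseteq> \<phi> V \<longleftrightarrow> U \<subseteq> V"
    and C': "subset.maxchain (\<phi> ` P) C'"
  obtains C where "subset.maxchain P C" "card C' = card C"
proof -
  define C where "C = {U\<in>P. \<phi> U \<in> C'}"
  have img: "\<phi> ` C = C'"
    using subset_maxchainD(1)[OF C'] unfolding C_def by blast
  have "inj_on \<phi> P"
  proof (rule inj_onI)
    fix U V
    assume "U \<in> P" "V \<in> P" "\<phi> U = \<phi> V"
    then show "U = V"
      using emb[of U V] emb[of V U] by blast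
  qed
  moreover have "C \<subseteq> P"
    unfolding C_def by blast
  ultimately have "card C' = card C"
    using img card_image[OF inj_on_subset] by metis
  moreover have "subset.maxchain P C"
    unfolding subset_maxchain_iff subset_chain_def
  proof (intro conjI ballI impI)
    show "C \<subseteq> P"
      by fact
    show "U \<subseteq> V \<or> V \<subseteq> U" if "U \<in> C" "V \<in> C" for U V
      using that subset_maxchainD(2)[OF C', of "\<phi> U" "\<phi> V"] emb unfolding C_def by auto
    show "Y \<in> C" if Y: "Y \<in> P" "\<forall>U\<in>C. Y \<subseteq> U \<or> U \<subseteq> Y" for Y
    proof -
      have "\<phi> Y \<subseteq> W \<or> W \<subseteq> \<phi> Y" if "W \<in> C'" for W
      proof -
        obtain U where U: "U \<in> C" "W = \<phi> U"
          using \<open>W \<in> C'\<close> img by blast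
        then have "U \<in> P" "Y \<subseteq> U \<or> U \<subseteq> Y"
          using Y(2) unfolding C_def by auto
        then show ?thesis
          using emb[OF Y(1) \<open>U \<in> P\<close>] emb[OF \<open>U \<in> P\<close> Y(1)] U(2) by blast
      qed
      then have "\<phi> Y \<in> C'"
        using Y(1) by (intro subset_maxchainD(3)[OF C']) auto
      then show ?thesis
        unfolding C_def using Y(1) by blast
    qed
  qed
  ultimately show ?thesis
    using that by blast
qed

lemma min_Inter_card_image:
  assumes Ms: "\<forall>M\<in>Ms. saturated f A M"
  shows "min_Inter_card (f ` A) ((`) f ` Ms) = min_Inter_card A Ms"
proof -
  have inj: "inj_on ((`) f) Ms"
    using Ms saturated_image_eq_iff by (intro inj_onI) blast
  have image_Inter: "f ` A \<inter> \<Inter>((`) f ` F) = f ` (A \<inter> \<Inter>F)" if "F \<subseteq> Ms" for F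
    using image_Inter_saturated[of F f A] that Ms by auto
  have Inter_eq_iff: "f ` (A \<inter> \<Inter>F) = f ` (A \<inter> \<Inter>Ms) \<longleftrightarrow> A \<inter> \<Inter>F = A \<inter> \<Inter>Ms"
    if "F \<subseteq> Ms" for F
  proof (rule saturated_image_eq_iff)
    show "saturated f A (A \<inter> \<Inter>F)" "saturated f A (A \<inter> \<Inter>Ms)"
      using that Ms by (auto intro!: saturated_Inter)
  qed
  have "(\<exists>F'. finite F' \<and> card F' = n \<and> F' \<subseteq> (`) f ` Ms \<and>
            f ` A \<inter> \<Inter>F' = f ` A \<inter> \<Inter>((`) f ` Ms)) \<longleftrightarrow>
        (\<exists>F. finite F \<and> card F = n \<and> F \<subseteq> Ms \<and> A \<inter> \<Inter>F = A \<inter> \<Inter>Ms)" for n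
  proof
    assume "\<exists>F'. finite F' \<and> card F' = n \<and> F' \<subseteq> (`) f ` Ms \<and>
              f ` A \<inter> \<Inter>F' = f ` A \<inter> \<Inter>((`) f ` Ms)"
    then obtain F where F: "F \<subseteq> Ms" "finite ((`) f ` F)" "card ((`) f ` F) = n"
        "f ` A \<inter> \<Inter>((`) f ` F) = f ` A \<inter> \<Inter>((`) f ` Ms)"
      by (auto simp: subset_image_iff)
    moreover have "inj_on ((`) f) F"
      using inj F(1) by (rule inj_on_subset)
    ultimately have "finite F" "card F = n" "A \<inter> \<Inter>F = A \<inter> \<Inter>Ms"
      using image_Inter[of F] image_Inter[of Ms] Inter_eq_iff[of F]
      by (simp_all add: finite_image_iff card_image)
    with F(1) show "\<exists>F. finite F \<and> card F = n \<and> F \<subseteq> Ms \<and> A \<inter> \<Inter>F = A \<inter> \<Inter>Ms"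
      by blast
  next
    assume "\<exists>F. finite F \<and> card F = n \<and> F \<subseteq> Ms \<and> A \<inter> \<Inter>F = A \<inter> \<Inter>Ms"
    then obtain F where F: "finite F" "card F = n" "F \<subseteq> Ms" "A \<inter> \<Inter>F = A \<inter> \<Inter>Ms"
      by blast
    moreover have "card ((`) f ` F) = n"
      using inj_on_subset[OF inj F(3)] F(2) card_image by blast
    ultimately show "\<exists>F'. finite F' \<and> card F' = n \<and> F' \<subseteq> (`) f ` Ms \<and>
              f ` A \<inter> \<Inter>F' = f ` A \<inter> \<Inter>((`) f ` Ms)"
      using image_Inter[of F] image_Inter[of Ms] by (intro exI[of _ "(`) f ` F"]) auto
  qed
  then show ?thesis
    unfolding min_Inter_card_def by simp
qed

lemma maxchain_meet_closure_image:
  assumes Ms: "\<forall>M\<in>Ms. saturated f A M"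
    and C': "subset.maxchain (meet_closure (f ` A) ((`) f ` Ms)) C'"
  obtains C where "subset.maxchain (meet_closure A Ms) C" "card C' = card C"
proof (rule maxchain_image_embedding)
  show "f ` U \<subseteq> f ` V \<longleftrightarrow> U \<subseteq> V" if "U \<in> meet_closure A Ms" "V \<in> meet_closure A Ms" for U V
    using that saturated_meet_closure[OF Ms] by (intro saturated_image_subset_iff)
  show "subset.maxchain ((`) f ` meet_closure A Ms) C'"
    using C' unfolding meet_closure_image[OF Ms] .
qed (use that in blast)

section \<open>The poset of maximal intersections\<close>

lemma maximal_subgroups_subset_Pow: "{M. maximal_subgroup G M} \<subseteq> Pow (carrier G)"
  unfolding maximal_subgroup_def using subgroup.subset by blast

lemma MIposet_eq_meet_closure: "MIposet G = meet_closure (carrier G) {M. maximal_subgroup G M}"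
  unfolding MIposet_def meet_closure_def max_intersection_def by auto

lemma alpha_eq_min_Inter_card: "alpha G = min_Inter_card (carrier G) {M. maximal_subgroup G M}"
  unfolding alpha_def min_Inter_card_def frattini_def by (simp add: Ball_Collect)

lemma unrefinable_chain_imp_maxchain:
  assumes K: "unrefinable_chain G K t"
  shows "subset.maxchain (MIposet G) (K ` {0..t})" "card (K ` {0..t}) = Suc t"
proof -
  have dec: "\<forall>i<t. K (Suc i) \<subset> K i"
    using K unfolding unrefinable_chain_def by blast
  have "inj_on K {0..t}"
  proof (rule inj_onI)
    fix i j
    assume "i \<in> {0..t}" "j \<in> {0..t}" "K i = K j"
    then show "i = j"
      using strict_antimono_chain[OF dec, of i j] strict_antimono_chain[OF dec, of j i]
      by (cases i j rule: linorder_cases) auto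
  qed
  then show "card (K ` {0..t}) = Suc t"
    by (simp add: card_image)
  show "subset.maxchain (MIposet G) (K ` {0..t})"
    unfolding subset_maxchain_iff subset_chain_def
  proof (intro conjI ballI impI)
    show "K ` {0..t} \<subseteq> MIposet G"
      using K unfolding unrefinable_chain_def by auto
    show "U \<subseteq> V \<or> V \<subseteq> U" if UV: "U \<in> K ` {0..t}" "V \<in> K ` {0..t}" for U V
    proof -
      obtain i j where "i \<le> t" "j \<le> t" "U = K i" "V = K j"
        using UV by auto
      then show ?thesis
        using strict_antimono_chain[OF dec, of i j] strict_antimono_chain[OF dec, of j i]
        by (cases i j rule: linorder_cases) auto
    qed
    show "Y \<in> K ` {0..t}" if "Y \<in> MIposet G" "\<forall>U\<in>K ` {0..t}. Y \<subseteq> U \<or> U \<subseteq> Y" for Y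
    proof -
      have "\<forall>i\<le>t. Y \<subseteq> K i \<or> K i \<subseteq> Y"
        using that(2) by simp
      then show ?thesis
        using K that(1) unfolding unrefinable_chain_def by blast
    qed
  qed
qed

lemma maxchain_imp_unrefinable_chain:
  assumes "finite C" "subset.maxchain (MIposet G) C" "card C = Suc t"
  shows "\<exists>K. unrefinable_chain G K t"
proof -
  obtain K where K: "K ` {0..t} = C" "\<forall>i<t. K (Suc i) \<subset> K i"
    using finite_chain_enumeration[OF assms(1,3) subset.maxchain_imp_chain[OF assms(2)]] by blast
  have "unrefinable_chain G K t"
    unfolding unrefinable_chain_def
  proof (intro conjI allI impI notI)
    show "K i \<in> MIposet G" if "i \<le> t" for i
    proof -
      have "K i \<in> C"
        using that K(1) by auto
      then show ?thesis
        using subset_maxchainD(1)[OF assms(2)] by blast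
    qed
    show "K (Suc i) \<subset> K i" if "i < t" for i
      using that K(2) by blast
    assume "\<exists>Y\<in>MIposet G. Y \<notin> K ` {0..t} \<and> (\<forall>i\<le>t. Y \<subseteq> K i \<or> K i \<subseteq> Y)"
    then obtain Y where Y: "Y \<in> MIposet G" "Y \<notin> C" "\<forall>i\<le>t. Y \<subseteq> K i \<or> K i \<subseteq> Y"
      using K(1) by blast
    have "Y \<subseteq> U \<or> U \<subseteq> Y" if "U \<in> C" for U
      using that Y(3) K(1) by auto
    then have "Y \<in> C"
      using subset_maxchainD(3)[OF assms(2) Y(1)] by blast
    with Y(2) show False
      by contradiction
  qed
  then show ?thesis
    by blast
qed

lemma finite_MIposet: "finite (carrier G) \<Longrightarrow> finite (MIposet G)"
  unfolding MIposet_eq_meet_closure by (intro finite_meet_closure maximal_subgroups_subset_Pow)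

lemma maxchain_MIposet_finite:
  assumes "finite (carrier G)" "subset.maxchain (MIposet G) C"
  shows "finite C" "card C > 0"
proof -
  show "finite C"
    using finite_subset[OF subset_maxchainD(1)[OF assms(2)] finite_MIposet[OF assms(1)]] .
  have "U \<subseteq> carrier G" if "U \<in> C" for U
    using that subset_maxchainD(1)[OF assms(2)] meet_closure_subset_Pow[OF maximal_subgroups_subset_Pow]
    unfolding MIposet_eq_meet_closure by blast
  then have "carrier G \<in> C"
    using subset_maxchainD(3)[OF assms(2)] unfolding MIposet_def by blast
  with \<open>finite C\<close> show "card C > 0"
    using card_gt_0_iff by blast
qed

lemma unrefinable_chain_iff_maxchain:
  assumes "finite (carrier G)"
  shows "(\<exists>K. unrefinable_chain G K t) \<longleftrightarrow> (\<exists>C. subset.maxchain (MIposet G) C \<and> card C = Suc t)"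
  using unrefinable_chain_imp_maxchain maxchain_imp_unrefinable_chain
    maxchain_MIposet_finite(1)[OF assms] by metis

lemma Min_Max_eq_iff:
  fixes L :: "'a::linorder set"
  assumes "finite L" "L \<noteq> {}"
  shows "Min L = Max L \<and> Max L = a \<longleftrightarrow> L = {a}"
proof
  assume "Min L = Max L \<and> Max L = a"
  then have "L \<subseteq> {a}"
    using Min_le[OF assms(1)] Max_ge[OF assms(1)] by (metis order_antisym singletonI subsetI)
  then show "L = {a}"
    using assms(2) by blast
qed simp

lemma unrefinable_chain_lengths:
  assumes "finite (carrier G)"
  shows "finite {t. \<exists>K. unrefinable_chain G K t}" "{t. \<exists>K. unrefinable_chain G K t} \<noteq> {}"
proof -
  have "{t. \<exists>K. unrefinable_chain G K t} \<subseteq> {..card (MIposet G)}"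
  proof
    fix t
    assume "t \<in> {t. \<exists>K. unrefinable_chain G K t}"
    then obtain C where "subset.maxchain (MIposet G) C" "card C = Suc t"
      using unrefinable_chain_iff_maxchain[OF assms] by blast
    then have "Suc t \<le> card (MIposet G)"
      using card_mono[OF finite_MIposet[OF assms] subset_maxchainD(1)] by metis
    then show "t \<in> {..card (MIposet G)}"
      by simp
  qed
  then show "finite {t. \<exists>K. unrefinable_chain G K t}"
    by (rule finite_subset) simp
  obtain C where C: "subset.maxchain (MIposet G) C"
    using subset.Hausdorff by blast
  then have "card C = Suc (card C - 1)"
    using maxchain_MIposet_finite(2)[OF assms C] by simp
  with C have "\<exists>K. unrefinable_chain G K (card C - 1)"
    unfolding unrefinable_chain_iff_maxchain[OF assms] by blast
  then show "{t. \<exists>K. unrefinable_chain G K t} \<noteq> {}"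
    by blast
qed

lemma weakly_minmax_iff:
  assumes "finite (carrier G)"
  shows "weakly_minmax G \<longleftrightarrow> (\<forall>C. subset.maxchain (MIposet G) C \<longrightarrow> card C = Suc (alpha G))"
proof -
  define L where "L = {t. \<exists>K. unrefinable_chain G K t}"
  have "finite L" "L \<noteq> {}"
    unfolding L_def using unrefinable_chain_lengths[OF assms] by blast+
  have "MinInt G = Min L"
    unfolding MinInt_def using Least_Min \<open>finite L\<close> \<open>L \<noteq> {}\<close> unfolding L_def by blast
  moreover have "MaxInt G = Max L"
    unfolding MaxInt_def L_def ..
  ultimately have "weakly_minmax G \<longleftrightarrow> Min L = Max L \<and> Max L = alpha G"
    unfolding weakly_minmax_def by simp
  also have "\<dots> \<longleftrightarrow> L \<subseteq> {alpha G}"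
    using Min_Max_eq_iff[OF \<open>finite L\<close> \<open>L \<noteq> {}\<close>] \<open>L \<noteq> {}\<close> by blast
  also have "\<dots> \<longleftrightarrow> (\<forall>C. subset.maxchain (MIposet G) C \<longrightarrow> card C = Suc (alpha G))"
  proof
    assume L: "L \<subseteq> {alpha G}"
    show "\<forall>C. subset.maxchain (MIposet G) C \<longrightarrow> card C = Suc (alpha G)"
    proof (intro allI impI)
      fix C
      assume C: "subset.maxchain (MIposet G) C"
      then have "card C = Suc (card C - 1)"
        using maxchain_MIposet_finite(2)[OF assms C] by simp
      with C have "card C - 1 \<in> L"
        unfolding L_def mem_Collect_eq unrefinable_chain_iff_maxchain[OF assms] by blast
      then show "card C = Suc (alpha G)"
        using L \<open>card C = Suc (card C - 1)\<close> by auto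
    qed
  qed (auto simp: L_def unrefinable_chain_iff_maxchain[OF assms])
  finally show ?thesis .
qed

section \<open>Maximal subgroups of a quotient group\<close>

lemma (in group_hom) subgroup_vimage:
  assumes "subgroup W H"
  shows "subgroup {g \<in> carrier G. h g \<in> W} G"
proof (rule G.subgroupI)
  show "{g \<in> carrier G. h g \<in> W} \<noteq> {}"
    using subgroup.one_closed[OF assms] by force
  show "inv a \<in> {g \<in> carrier G. h g \<in> W}" if "a \<in> {g \<in> carrier G. h g \<in> W}" for a
    using that subgroup.m_inv_closed[OF assms] by simp
  show "a \<otimes> b \<in> {g \<in> carrier G. h g \<in> W}"
    if "a \<in> {g \<in> carrier G. h g \<in> W}" "b \<in> {g \<in> carrier G. h g \<in> W}" for a b
    using that subgroup.m_closed[OF assms] by simp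
qed blast

context normal
begin

lemma group_hom_Mod: "group_hom G (G Mod H) (\<lambda>a. H #> a)"
  unfolding group_hom_def group_hom_axioms_def
  using is_group factorgroup_is_group r_coset_hom_Mod by blast

lemma saturated_subgroup:
  assumes "subgroup K G" "H \<subseteq> K"
  shows "saturated (\<lambda>a. H #> a) (carrier G) K"
  unfolding saturated_def
proof (intro conjI subsetI)
  show "k \<in> carrier G" if "k \<in> K" for k
    using that subgroup.subset[OF assms(1)] by blast
  fix g
  assume "g \<in> carrier G \<inter> (\<lambda>a. H #> a) -` (\<lambda>a. H #> a) ` K"
  then obtain k where "g \<in> carrier G" "k \<in> K" "H #> g = H #> k"
    by blast
  then have "g \<in> H #> k"
    using rcos_self[OF _ subgroup_axioms] by blast
  then show "g \<in> K"
    using \<open>k \<in> K\<close> assms unfolding r_coset_def by (auto intro: subgroup.m_closed)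
qed

lemma subgroup_Mod_iff:
  "subgroup W (G Mod H) \<longleftrightarrow> (\<exists>K. subgroup K G \<and> H \<subseteq> K \<and> W = (\<lambda>a. H #> a) ` K)"
proof
  interpret \<pi>: group_hom G "G Mod H" "\<lambda>a. H #> a"
    by (rule group_hom_Mod)
  assume W: "subgroup W (G Mod H)"
  define K where "K = {g \<in> carrier G. H #> g \<in> W}"
  have "subgroup K G"
    unfolding K_def using W by (rule \<pi>.subgroup_vimage)
  moreover have "H \<subseteq> K"
    unfolding K_def using subgroup.one_closed[OF W] rcos_const[OF is_group] subset by auto
  moreover have "W \<subseteq> (\<lambda>a. H #> a) ` carrier G"
    using subgroup.subset[OF W] by (simp add: carrier_FactGroup)
  then have "W = (\<lambda>a. H #> a) ` K"
    unfolding K_def by blast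
  ultimately show "\<exists>K. subgroup K G \<and> H \<subseteq> K \<and> W = (\<lambda>a. H #> a) ` K"
    by blast
next
  interpret \<pi>: group_hom G "G Mod H" "\<lambda>a. H #> a"
    by (rule group_hom_Mod)
  assume "\<exists>K. subgroup K G \<and> H \<subseteq> K \<and> W = (\<lambda>a. H #> a) ` K"
  then show "subgroup W (G Mod H)"
    using \<pi>.subgroup_img_is_subgroup by blast
qed

lemma Mod_image_subset_iff:
  assumes "subgroup K G" "H \<subseteq> K" "subgroup L G" "H \<subseteq> L"
  shows "(\<lambda>a. H #> a) ` K \<subseteq> (\<lambda>a. H #> a) ` L \<longleftrightarrow> K \<subseteq> L"
  using saturated_image_subset_iff[OF saturated_subgroup[OF assms(1,2)] saturated_subgroup[OF assms(3,4)]] .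

lemma Mod_image_eq_carrier_iff:
  assumes "subgroup K G" "H \<subseteq> K"
  shows "(\<lambda>a. H #> a) ` K = carrier (G Mod H) \<longleftrightarrow> K = carrier G"
  using saturated_image_eq_iff[OF saturated_subgroup[OF assms] saturated_subgroup[OF subgroup_self subset]]
  unfolding carrier_FactGroup .

lemma maximal_subgroup_Mod_image:
  assumes M: "maximal_subgroup G M" "H \<subseteq> M"
  shows "maximal_subgroup (G Mod H) ((\<lambda>a. H #> a) ` M)"
  unfolding maximal_subgroup_def
proof (intro conjI allI impI)
  have "subgroup M G" "M \<noteq> carrier G"
    using M(1) unfolding maximal_subgroup_def by blast+
  then show "subgroup ((\<lambda>a. H #> a) ` M) (G Mod H)" "(\<lambda>a. H #> a) ` M \<noteq> carrier (G Mod H)"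
    using Mod_image_eq_carrier_iff[OF _ M(2)] M(2) unfolding subgroup_Mod_iff by blast+
  fix V
  assume V: "subgroup V (G Mod H) \<and> (\<lambda>a. H #> a) ` M \<subseteq> V"
  then obtain L where L: "subgroup L G" "H \<subseteq> L" "V = (\<lambda>a. H #> a) ` L"
    unfolding subgroup_Mod_iff by blast
  then have "M \<subseteq> L"
    using V Mod_image_subset_iff[OF \<open>subgroup M G\<close> M(2) L(1,2)] by simp
  then have "L = M \<or> L = carrier G"
    using M(1) L(1) unfolding maximal_subgroup_def by blast
  then show "V = (\<lambda>a. H #> a) ` M \<or> V = carrier (G Mod H)"
    using L(3) carrier_FactGroup by auto
qed

lemma maximal_subgroup_ModE:
  assumes W: "maximal_subgroup (G Mod H) W"
  obtains M where "maximal_subgroup G M" "H \<subseteq> M" "W = (\<lambda>a. H #> a) ` M"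
proof -
  obtain M where M: "subgroup M G" "H \<subseteq> M" "W = (\<lambda>a. H #> a) ` M"
    using W unfolding maximal_subgroup_def subgroup_Mod_iff by blast
  have "M \<noteq> carrier G"
    using W Mod_image_eq_carrier_iff[OF M(1,2)] M(3) unfolding maximal_subgroup_def by blast
  moreover have "K = M \<or> K = carrier G" if K: "subgroup K G" "M \<subseteq> K" for K
  proof -
    have "H \<subseteq> K"
      using M(2) K(2) by blast
    then have "subgroup ((\<lambda>a. H #> a) ` K) (G Mod H)" "W \<subseteq> (\<lambda>a. H #> a) ` K"
      using K M(3) unfolding subgroup_Mod_iff by blast+
    then have "(\<lambda>a. H #> a) ` K = W \<or> (\<lambda>a. H #> a) ` K = carrier (G Mod H)"
      using W unfolding maximal_subgroup_def by blast
    then show ?thesis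
      using Mod_image_subset_iff[OF K(1) \<open>H \<subseteq> K\<close> M(1,2)] Mod_image_eq_carrier_iff[OF K(1) \<open>H \<subseteq> K\<close>]
        K(2) M(3) by blast
  qed
  ultimately have "maximal_subgroup G M"
    unfolding maximal_subgroup_def using M(1) by blast
  with M(2,3) show ?thesis
    using that by blast
qed

lemma maximal_subgroups_Mod:
  "{W. maximal_subgroup (G Mod H) W} = (`) (\<lambda>a. H #> a) ` {M. maximal_subgroup G M \<and> H \<subseteq> M}"
proof (intro equalityI subsetI)
  fix W
  assume "W \<in> {W. maximal_subgroup (G Mod H) W}"
  then obtain M where "maximal_subgroup G M" "H \<subseteq> M" "W = (\<lambda>a. H #> a) ` M"
    by (auto elim: maximal_subgroup_ModE)
  then show "W \<in> (`) (\<lambda>a. H #> a) ` {M. maximal_subgroup G M \<and> H \<subseteq> M}"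
    by blast
next
  fix W
  assume "W \<in> (`) (\<lambda>a. H #> a) ` {M. maximal_subgroup G M \<and> H \<subseteq> M}"
  then show "W \<in> {W. maximal_subgroup (G Mod H) W}"
    using maximal_subgroup_Mod_image by blast
qed

lemma saturated_maximal_subgroups:
  "\<forall>M\<in>{M. maximal_subgroup G M \<and> H \<subseteq> M}. saturated (\<lambda>a. H #> a) (carrier G) M"
  unfolding maximal_subgroup_def using saturated_subgroup by blast

lemma alpha_Mod: "alpha (G Mod H) = min_Inter_card (carrier G) {M. maximal_subgroup G M \<and> H \<subseteq> M}"
  unfolding alpha_eq_min_Inter_card maximal_subgroups_Mod carrier_FactGroup
  using min_Inter_card_image[OF saturated_maximal_subgroups] .

lemma maxchain_MIposet_Mod:
  assumes "subset.maxchain (MIposet (G Mod H)) C"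
  obtains C0 where "subset.maxchain (meet_closure (carrier G) {M. maximal_subgroup G M \<and> H \<subseteq> M}) C0"
    "card C = card C0"
  using maxchain_meet_closure_image[OF saturated_maximal_subgroups] assms
  unfolding MIposet_eq_meet_closure maximal_subgroups_Mod carrier_FactGroup by blast

end

theorem mainTheorem6:
  fixes G :: "('a, 'b) monoid_scheme" and N :: "'a set"
  assumes "group G" and "finite (carrier G)" and "weakly_minmax G"
    and "N \<lhd> G" and "max_intersection G N"
  shows "weakly_minmax (G Mod N)"
proof -
  interpret normal N G
    using assms(4) .
  have N: "N \<in> meet_closure (carrier G) {M. maximal_subgroup G M}"
    using assms(5) unfolding MIposet_eq_meet_closure[symmetric] MIposet_def by blast
  have graded: "\<And>E. subset.maxchain (meet_closure (carrier G) {M. maximal_subgroup G M}) E \<Longrightarrow>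
      card E = Suc (min_Inter_card (carrier G) {M. maximal_subgroup G M})"
    using assms(3) unfolding weakly_minmax_iff[OF assms(2)] MIposet_eq_meet_closure
      alpha_eq_min_Inter_card by blast
  have "card C = Suc (alpha (G Mod N))" if C: "subset.maxchain (MIposet (G Mod N)) C" for C
  proof -
    obtain C0 where "subset.maxchain (meet_closure (carrier G) {M. maximal_subgroup G M \<and> N \<subseteq> M}) C0"
      "card C = card C0"
      by (rule maxchain_MIposet_Mod[OF C])
    then show ?thesis
      using card_maxchain_meet_closure_above[OF assms(2) maximal_subgroups_subset_Pow N graded]
      unfolding alpha_Mod by simp
  qed
  moreover have "finite (carrier (G Mod N))"
    using assms(2) by (simp add: carrier_FactGroup)
  ultimately show ?thesis
    using weakly_minmax_iff by blast
qed

end
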